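(* Let $n\ge 1$ and let $\Omega=\bigoplus_{j=1}^{n}\begin{pmatrix}0&1\\-1&0\end{pmatrix}$. Let $\sigma$ be a real symmetric $2n\times 2n$ matrix satisfying $\sigma+i\Omega\ge 0$ (i.e. $\sigma$ is an $n$-mode covariance matrix). Let $\lambda^{\uparrow}_1\le\lambda^{\uparrow}_2\le\dots\le\lambda^{\uparrow}_{2n}$ be the eigenvalues of $\sigma$ in increasing order and $\lambda^{\downarrow}_1\ge\lambda^{\downarrow}_2\ge\dots\ge\lambda^{\downarrow}_{2n}$ the same eigenvalues in decreasing order. Then $$\lambda^{\uparrow}_j\,\lambda^{\downarrow}_j\ge 1\qquad\text{for all }1\le j\le n.$$
   Context: For a system of $n$ bosonic modes with canonical operators $\hat{\mathbf R}=(\hat x_1,\hat p_1,\dots,\hat x_n,\hat p_n)^{\sf T}$ obeying $[\hat R_j,\hat R_k]=i\Omega_{jk}$, the covariance matrix (CM) of a state $\varrho$ is $\sigma_{jk}=\mathrm{Tr}(\{\hat R_j,\hat R_k\}\varrho)-2\mathrm{Tr}(\hat R_j\varrho)\mathrm{Tr}(\hat R_k\varrho)$; a real symmetric matrix is a CM of a physical state iff $\sigma+i\Omega\ge0$ (Robertson–Schrödinger uncertainty relation). *)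

theory Defs
  imports "Jordan_Normal_Form.Matrix" "Jordan_Normal_Form.Char_Poly" "Jordan_Normal_Form.Conjugate"
    "HOL-Computational_Algebra.Polynomial" "HOL-Library.Multiset"
begin

(* Symplectic form Omega = direct sum of n blocks [[0,1],[-1,0]], ordering (x1,p1,...,xn,pn),
   indices 0-based. *)
definition symp_form :: "nat \<Rightarrow> real mat" where
  "symp_form n = mat (2*n) (2*n) (\<lambda>(i,j).
      if even i \<and> j = i + 1 then 1 else if odd i \<and> i = j + 1 then -1 else 0)"

definition psd_cmat :: "complex mat \<Rightarrow> bool" where
  "psd_cmat M \<longleftrightarrow> M \<in> carrier_mat (dim_row M) (dim_row M) \<and>
     (\<forall>v \<in> carrier_vec (dim_row M).
        Im (conjugate v \<bullet> (M *\<^sub>v v)) = 0 \<and> 0 \<le> Re (conjugate v \<bullet> (M *\<^sub>v v)))"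

definition sigma_plus_iOmega :: "nat \<Rightarrow> real mat \<Rightarrow> complex mat" where
  "sigma_plus_iOmega n \<sigma> = map_mat complex_of_real \<sigma> + smult_mat \<i> (map_mat complex_of_real (symp_form n))"

definition eig_up :: "real mat \<Rightarrow> real list" where
  "eig_up A = sorted_list_of_multiset (proots (char_poly A))"

definition eig_down :: "real mat \<Rightarrow> real list" where
  "eig_down A = rev (eig_up A)"

end

theory Submission
  imports Defs
begin

(* Let z = Omega y for a real vector y, so that |z| = |y|. Evaluating the positivity of
   sigma + i Omega at the complex vector y - i t z gives
     (y . sigma y) - 2 t |y|^2 + t^2 (z . sigma z) >= 0   for all real t,
   hence the uncertainty relation (y . sigma y) (z . sigma z) >= |y|^4.
   Now diagonalise sigma orthogonally. The eigenvectors of the j smallest eigenvalues span a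
   j-dimensional space, so it contains a vector y /= 0 for which z is orthogonal to the
   eigenvectors of the j - 1 largest eigenvalues. Then y . sigma y <= lambda_up_j |y|^2 and
   z . sigma z <= lambda_down_j |z|^2, and the uncertainty relation gives
   lambda_up_j lambda_down_j >= 1. *)

section \<open>Orthogonal diagonalisation of real symmetric matrices\<close>

lemma scalar_prod_self_pos:
  fixes u :: "real vec"
  assumes "u \<in> carrier_vec n" "u \<noteq> 0\<^sub>v n"
  shows "u \<bullet> u > 0"
  using conjugate_square_greater_0_vec[OF assms(1)] assms(2) by simp

lemma scalar_prod_self_nonneg: "0 \<le> (u :: real vec) \<bullet> u"
  using conjugate_square_ge_0_vec[of u] by simp

lemma symmetric_mat_scalar_prod_comm:
  fixes A :: "'a::comm_semiring_0 mat"
  assumes A: "A \<in> carrier_mat n n" "transpose_mat A = A"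
    and x: "x \<in> carrier_vec n" and y: "y \<in> carrier_vec n"
  shows "x \<bullet> (A *\<^sub>v y) = y \<bullet> (A *\<^sub>v x)"
proof -
  have "x \<bullet> (A *\<^sub>v y) = (A *\<^sub>v y) \<bullet> x" using A x y by (simp add: comm_scalar_prod[of _ n])
  also have "\<dots> = y \<bullet> (A *\<^sub>v x)" using transpose_vec_mult_scalar[OF A(1) x y] A(2) by simp
  finally show ?thesis .
qed

lemma real_mat_complex_eigenvector_parts:
  fixes A :: "real mat" and w :: "complex vec"
  assumes A: "A \<in> carrier_mat n n" and w: "w \<in> carrier_vec n"
    and eig: "map_mat complex_of_real A *\<^sub>v w = z \<cdot>\<^sub>v w"
  shows "A *\<^sub>v map_vec Re w = Re z \<cdot>\<^sub>v map_vec Re w - Im z \<cdot>\<^sub>v map_vec Im w"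
    and "A *\<^sub>v map_vec Im w = Im z \<cdot>\<^sub>v map_vec Re w + Re z \<cdot>\<^sub>v map_vec Im w"
proof -
  have row: "(\<Sum>j<n. complex_of_real (A $$ (i,j)) * w $ j) = z * w $ i" if "i < n" for i
  proof -
    have "(map_mat complex_of_real A *\<^sub>v w) $ i = (\<Sum>j<n. complex_of_real (A $$ (i,j)) * w $ j)"
      using that A w by (simp add: scalar_prod_def lessThan_atLeast0)
    then show ?thesis using eig that w by simp
  qed
  show "A *\<^sub>v map_vec Re w = Re z \<cdot>\<^sub>v map_vec Re w - Im z \<cdot>\<^sub>v map_vec Im w"
  proof (rule eq_vecI)
    fix i assume "i < dim_vec (Re z \<cdot>\<^sub>v map_vec Re w - Im z \<cdot>\<^sub>v map_vec Im w)"
    then have i: "i < n" using w by simp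
    have "(\<Sum>j<n. A $$ (i,j) * Re (w $ j)) = Re z * Re (w $ i) - Im z * Im (w $ i)"
      using arg_cong[OF row[OF i], of Re] by (simp add: Re_sum)
    then show "(A *\<^sub>v map_vec Re w) $ i = (Re z \<cdot>\<^sub>v map_vec Re w - Im z \<cdot>\<^sub>v map_vec Im w) $ i"
      using i A w by (simp add: scalar_prod_def lessThan_atLeast0)
  qed (use A w in auto)
  show "A *\<^sub>v map_vec Im w = Im z \<cdot>\<^sub>v map_vec Re w + Re z \<cdot>\<^sub>v map_vec Im w"
  proof (rule eq_vecI)
    fix i assume "i < dim_vec (Im z \<cdot>\<^sub>v map_vec Re w + Re z \<cdot>\<^sub>v map_vec Im w)"
    then have i: "i < n" using w by simp
    have "(\<Sum>j<n. A $$ (i,j) * Im (w $ j)) = Im z * Re (w $ i) + Re z * Im (w $ i)"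
      using arg_cong[OF row[OF i], of Im] by (simp add: Im_sum)
    then show "(A *\<^sub>v map_vec Im w) $ i = (Im z \<cdot>\<^sub>v map_vec Re w + Re z \<cdot>\<^sub>v map_vec Im w) $ i"
      using i A w by (simp add: scalar_prod_def lessThan_atLeast0)
  qed (use A w in auto)
qed

lemma symmetric_real_mat_has_eigenvector:
  fixes A :: "real mat"
  assumes A: "A \<in> carrier_mat n n" and sym: "transpose_mat A = A" and n: "n > 0"
  obtains e v where "v \<in> carrier_vec n" "v \<noteq> 0\<^sub>v n" "A *\<^sub>v v = e \<cdot>\<^sub>v v"
proof -
  define Ac where "Ac = map_mat complex_of_real A"
  have Ac: "Ac \<in> carrier_mat n n" using A unfolding Ac_def by auto
  have "degree (char_poly Ac) = n" using degree_monic_char_poly[OF Ac] by auto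
  then have "\<not> constant (poly (char_poly Ac))" using n by (simp add: constant_degree)
  then obtain z where "poly (char_poly Ac) z = 0" using fundamental_theorem_of_algebra by blast
  then obtain w where w: "w \<in> carrier_vec n" "w \<noteq> 0\<^sub>v n" "Ac *\<^sub>v w = z \<cdot>\<^sub>v w"
    using eigenvalue_root_char_poly[OF Ac] Ac unfolding eigenvalue_def eigenvector_def by auto
  define x where "x = map_vec Re w"
  define y where "y = map_vec Im w"
  have x: "x \<in> carrier_vec n" and y: "y \<in> carrier_vec n" using w(1) unfolding x_def y_def by auto
  have Ax: "A *\<^sub>v x = Re z \<cdot>\<^sub>v x - Im z \<cdot>\<^sub>v y"
    and Ay: "A *\<^sub>v y = Im z \<cdot>\<^sub>v x + Re z \<cdot>\<^sub>v y"
    using real_mat_complex_eigenvector_parts[OF A w(1) w(3)[unfolded Ac_def]]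
    unfolding x_def y_def by auto
  have "x \<noteq> 0\<^sub>v n \<or> y \<noteq> 0\<^sub>v n"
  proof (rule ccontr)
    assume "\<not> ?thesis"
    then have "w = 0\<^sub>v n"
      using w(1) unfolding x_def y_def by (auto simp: vec_eq_iff complex_eq_iff)
    with w(2) show False ..
  qed
  then have pos: "x \<bullet> x + y \<bullet> y > 0"
    using scalar_prod_self_pos[OF x] scalar_prod_self_pos[OF y]
      scalar_prod_self_nonneg[of x] scalar_prod_self_nonneg[of y] by fastforce
  \<comment> \<open>symmetry of \<open>A\<close> forces the eigenvalue \<open>z\<close> to be real\<close>
  have "x \<bullet> (A *\<^sub>v y) = y \<bullet> (A *\<^sub>v x)" by (rule symmetric_mat_scalar_prod_comm[OF A sym x y])
  then have "Im z * (x \<bullet> x + y \<bullet> y) = 0"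
    unfolding Ax Ay using x y
    by (simp add: scalar_prod_add_distrib[of _ n] scalar_prod_minus_distrib[of _ n]
        comm_scalar_prod[of y n x] algebra_simps)
  with pos have "Im z = 0" by simp
  then have "A *\<^sub>v x = Re z \<cdot>\<^sub>v x" "A *\<^sub>v y = Re z \<cdot>\<^sub>v y" using Ax Ay x y by auto
  with x y \<open>x \<noteq> 0\<^sub>v n \<or> y \<noteq> 0\<^sub>v n\<close> that show thesis by blast
qed

definition reflection_mat :: "nat \<Rightarrow> real vec \<Rightarrow> real mat" where
  "reflection_mat n u = 1\<^sub>m n - mat n n (\<lambda>(i,j). 2 / (u \<bullet> u) * u $ i * u $ j)"

lemma dim_reflection_mat [simp]:
  "dim_row (reflection_mat n u) = n" "dim_col (reflection_mat n u) = n"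
  unfolding reflection_mat_def by auto

lemma reflection_mat_carrier [simp]: "reflection_mat n u \<in> carrier_mat n n"
  by (simp add: carrier_matI)

lemma transpose_reflection_mat: "transpose_mat (reflection_mat n u) = reflection_mat n u"
  unfolding reflection_mat_def by (rule eq_matI) auto

lemma reflection_mat_mult_vec:
  assumes u: "u \<in> carrier_vec n" and x: "x \<in> carrier_vec n"
  shows "reflection_mat n u *\<^sub>v x = x - (2 * (u \<bullet> x) / (u \<bullet> u)) \<cdot>\<^sub>v u"
proof (rule eq_vecI)
  fix i assume "i < dim_vec (x - (2 * (u \<bullet> x) / (u \<bullet> u)) \<cdot>\<^sub>v u)"
  then have i: "i < n" using u by simp
  have "(reflection_mat n u *\<^sub>v x) $ i
      = (\<Sum>k\<in>{0..<n}. ((if i = k then 1 else 0) - 2 / (u \<bullet> u) * u $ i * u $ k) * x $ k)"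
    using i x unfolding reflection_mat_def by (simp add: scalar_prod_def)
  also have "\<dots> = (\<Sum>k\<in>{0..<n}. (if k = i then x $ k else 0) - 2 / (u \<bullet> u) * u $ i * (u $ k * x $ k))"
    by (intro sum.cong) (auto simp: algebra_simps)
  also have "\<dots> = x $ i - 2 / (u \<bullet> u) * u $ i * (\<Sum>k\<in>{0..<n}. u $ k * x $ k)"
    using i by (simp add: sum_subtractf sum_distrib_left)
  finally show "(reflection_mat n u *\<^sub>v x) $ i = (x - (2 * (u \<bullet> x) / (u \<bullet> u)) \<cdot>\<^sub>v u) $ i"
    using i u x by (simp add: scalar_prod_def)
qed (use u x in auto)

lemma reflection_mat_involutive:
  assumes u: "u \<in> carrier_vec n" "u \<noteq> 0\<^sub>v n"
  shows "reflection_mat n u * reflection_mat n u = 1\<^sub>m n"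
proof -
  let ?R = "reflection_mat n u"
  have uu: "u \<bullet> u \<noteq> 0" using scalar_prod_self_pos[OF u] by simp
  have twice: "?R *\<^sub>v (?R *\<^sub>v x) = x" if x: "x \<in> carrier_vec n" for x
  proof -
    define k where "k = 2 * (u \<bullet> x) / (u \<bullet> u)"
    have Rx: "?R *\<^sub>v x = x - k \<cdot>\<^sub>v u" unfolding k_def by (rule reflection_mat_mult_vec[OF u(1) x])
    have "u \<bullet> (x - k \<cdot>\<^sub>v u) = - (u \<bullet> x)"
      using u x uu by (simp add: scalar_prod_minus_distrib[of _ n] k_def)
    then have "?R *\<^sub>v (?R *\<^sub>v x) = (x - k \<cdot>\<^sub>v u) + k \<cdot>\<^sub>v u"
      unfolding Rx using u x by (subst reflection_mat_mult_vec) (auto simp: k_def)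
    also have "\<dots> = x" using u x by auto
    finally show ?thesis .
  qed
  show ?thesis
  proof (rule eq_matI)
    fix i j assume "i < dim_row (1\<^sub>m n :: real mat)" "j < dim_col (1\<^sub>m n :: real mat)"
    then have i: "i < n" and j: "j < n" by auto
    have "(?R * ?R) $$ (i,j) = ((?R * ?R) *\<^sub>v unit_vec n j) $ i" using i j by simp
    also have "\<dots> = unit_vec n j $ i"
      using twice[of "unit_vec n j"] by (simp add: assoc_mult_mat_vec[of _ n n _ n])
    finally show "(?R * ?R) $$ (i,j) = 1\<^sub>m n $$ (i,j)" using i j by simp
  qed auto
qed

lemma householder_to_unit_vec:
  fixes v :: "real vec"
  assumes v: "v \<in> carrier_vec n" "v \<bullet> v = 1" and n: "n > 0"
  obtains H where "H \<in> carrier_mat n n" "transpose_mat H = H" "H * H = 1\<^sub>m n"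
    "H *\<^sub>v v = unit_vec n 0"
proof (cases "v = unit_vec n 0")
  case True
  then show thesis using that[of "1\<^sub>m n"] by auto
next
  case False
  define u where "u = v - unit_vec n 0"
  have u: "u \<in> carrier_vec n" using v unfolding u_def by simp
  have e: "unit_vec n 0 \<in> carrier_vec n" by simp
  have v_eq: "v = u + unit_vec n 0" unfolding u_def using v by (intro eq_vecI) auto
  have u0: "u \<noteq> 0\<^sub>v n"
  proof
    assume "u = 0\<^sub>v n"
    then have "v = unit_vec n 0" unfolding v_eq by simp
    with False show False ..
  qed
  have ev: "unit_vec n 0 \<bullet> v = v $ 0" using v n by simp
  have ve: "v \<bullet> unit_vec n 0 = v $ 0" using v n by simp
  have uv: "u \<bullet> v = 1 - v $ 0"
    unfolding u_def minus_scalar_prod_distrib[OF v(1) e v(1)] ev v(2) ..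
  have "u \<bullet> u = u \<bullet> v - u \<bullet> unit_vec n 0"
    using scalar_prod_minus_distrib[OF u v(1) e] by (simp add: u_def[symmetric])
  also have "u \<bullet> unit_vec n 0 = v $ 0 - 1"
    unfolding u_def minus_scalar_prod_distrib[OF v(1) e e] ve using n by simp
  finally have uu: "u \<bullet> u = 2 * (1 - v $ 0)" unfolding uv by simp
  then have "v $ 0 \<noteq> 1" using scalar_prod_self_pos[OF u u0] by auto
  then have "reflection_mat n u *\<^sub>v v = v - u"
    using reflection_mat_mult_vec[OF u v(1)] u unfolding uv uu by simp
  also have "\<dots> = unit_vec n 0" unfolding u_def using v by (intro eq_vecI) auto
  finally show thesis
    using that[OF reflection_mat_carrier transpose_reflection_mat reflection_mat_involutive[OF u u0]]
    by blast
qed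

lemma symmetric_mat_eigen_unit_vec_block:
  fixes A :: "'a::comm_ring_1 mat"
  assumes A: "A \<in> carrier_mat (Suc k) (Suc k)" and sym: "transpose_mat A = A"
    and eig: "A *\<^sub>v unit_vec (Suc k) 0 = e \<cdot>\<^sub>v unit_vec (Suc k) 0"
  obtains B where "B \<in> carrier_mat k k" "transpose_mat B = B"
    "A = four_block_mat (mat 1 1 (\<lambda>_. e)) (0\<^sub>m 1 k) (0\<^sub>m k 1) B"
proof -
  have col0: "A $$ (i,0) = (if i = 0 then e else 0)" if "i < Suc k" for i
  proof -
    have "A $$ (i,0) = (A *\<^sub>v unit_vec (Suc k) 0) $ i" using A that by simp
    then show ?thesis unfolding eig using that by simp
  qed
  have row0: "A $$ (0,j) = (if j = 0 then e else 0)" if "j < Suc k" for j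
  proof -
    have "A $$ (0,j) = transpose_mat A $$ (j,0)" using A that by simp
    then show ?thesis using sym col0[OF that] by simp
  qed
  define B where "B = mat k k (\<lambda>(i,j). A $$ (Suc i, Suc j))"
  have B: "B \<in> carrier_mat k k" unfolding B_def by simp
  have "transpose_mat B = B"
  proof (rule eq_matI)
    fix i j assume "i < dim_row B" "j < dim_col B"
    then have i: "i < k" and j: "j < k" using B by auto
    have "A $$ (Suc j, Suc i) = transpose_mat A $$ (Suc i, Suc j)" using A i j by simp
    then show "transpose_mat B $$ (i,j) = B $$ (i,j)" using i j sym unfolding B_def by simp
  qed (use B in auto)
  moreover have "A = four_block_mat (mat 1 1 (\<lambda>_. e)) (0\<^sub>m 1 k) (0\<^sub>m k 1) B"
  proof (rule eq_matI)
    fix i j assume "i < dim_row (four_block_mat (mat 1 1 (\<lambda>_. e)) (0\<^sub>m 1 k) (0\<^sub>m k 1) B)"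
      "j < dim_col (four_block_mat (mat 1 1 (\<lambda>_. e)) (0\<^sub>m 1 k) (0\<^sub>m k 1) B)"
    then have i: "i < Suc k" and j: "j < Suc k" using B by auto
    show "A $$ (i,j) = four_block_mat (mat 1 1 (\<lambda>_. e)) (0\<^sub>m 1 k) (0\<^sub>m k 1) B $$ (i,j)"
    proof (cases "i = 0 \<or> j = 0")
      case True
      then show ?thesis using col0 row0 i j B by auto
    next
      case False
      then obtain i' j' where "i = Suc i'" "j = Suc j'" by (cases i; cases j) auto
      then show ?thesis using i j B unfolding B_def by auto
    qed
  qed (use A B in auto)
  ultimately show thesis using that B by blast
qed

lemma orthogonal_diagonalization_four_block:
  fixes P B E :: "'a::comm_ring_1 mat"
  assumes P: "P \<in> carrier_mat k k" "transpose_mat P * P = 1\<^sub>m k"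
    and B: "B \<in> carrier_mat k k" and diag: "diagonal_mat (transpose_mat P * B * P)"
    and E: "E \<in> carrier_mat 1 1"
  defines "R \<equiv> four_block_mat (1\<^sub>m 1) (0\<^sub>m 1 k) (0\<^sub>m k 1) P"
  shows "transpose_mat R * R = 1\<^sub>m (Suc k)"
    and "diagonal_mat (transpose_mat R * four_block_mat E (0\<^sub>m 1 k) (0\<^sub>m k 1) B * R)"
proof -
  have tR: "transpose_mat R = four_block_mat (1\<^sub>m 1) (0\<^sub>m 1 k) (0\<^sub>m k 1) (transpose_mat P)"
    unfolding R_def using P by (simp add: transpose_four_block_mat[of _ 1 1 _ k _ k])
  have "transpose_mat R * R = four_block_mat (1\<^sub>m 1) (0\<^sub>m 1 k) (0\<^sub>m k 1) (1\<^sub>m k)"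
    unfolding tR using P by (simp add: R_def mult_four_block_mat[of _ 1 1 _ k _ k _ _ 1 _ k])
  then show "transpose_mat R * R = 1\<^sub>m (Suc k)" by simp
  define C where "C = transpose_mat P * B * P"
  have C: "C \<in> carrier_mat k k" unfolding C_def using P B by simp
  have "transpose_mat R * four_block_mat E (0\<^sub>m 1 k) (0\<^sub>m k 1) B * R
      = four_block_mat E (0\<^sub>m 1 k) (0\<^sub>m k 1) C"
    unfolding tR C_def using P B E by (simp add: R_def mult_four_block_mat[of _ 1 1 _ k _ k _ _ 1 _ k])
  moreover have "diagonal_mat (four_block_mat E (0\<^sub>m 1 k) (0\<^sub>m k 1) C)"
    unfolding diagonal_mat_def
  proof (intro allI impI)
    fix i j assume "i < dim_row (four_block_mat E (0\<^sub>m 1 k) (0\<^sub>m k 1) C)"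
      "j < dim_col (four_block_mat E (0\<^sub>m 1 k) (0\<^sub>m k 1) C)" "i \<noteq> j"
    then show "four_block_mat E (0\<^sub>m 1 k) (0\<^sub>m k 1) C $$ (i,j) = 0"
      using diag[folded C_def] C E unfolding diagonal_mat_def
      by (fastforce simp: less_Suc_eq_0_disj)
  qed
  ultimately show "diagonal_mat (transpose_mat R * four_block_mat E (0\<^sub>m 1 k) (0\<^sub>m k 1) B * R)"
    by simp
qed

lemma symmetric_real_mat_reflect_eigenvector:
  fixes A :: "real mat"
  assumes A: "A \<in> carrier_mat n n" and sym: "transpose_mat A = A" and n: "n > 0"
  obtains H e where "H \<in> carrier_mat n n" "transpose_mat H = H" "H * H = 1\<^sub>m n"
    "transpose_mat (H * A * H) = H * A * H"
    "(H * A * H) *\<^sub>v unit_vec n 0 = e \<cdot>\<^sub>v unit_vec n 0"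
proof -
  let ?e0 = "unit_vec n 0"
  obtain e v where v: "v \<in> carrier_vec n" "v \<noteq> 0\<^sub>v n" "A *\<^sub>v v = e \<cdot>\<^sub>v v"
    using symmetric_real_mat_has_eigenvector[OF A sym n] by blast
  define w where "w = (1 / sqrt (v \<bullet> v)) \<cdot>\<^sub>v v"
  have w: "w \<in> carrier_vec n" "w \<bullet> w = 1" "A *\<^sub>v w = e \<cdot>\<^sub>v w"
    using v A scalar_prod_self_pos[OF v(1,2)] unfolding w_def
    by (auto simp: mult_mat_vec smult_smult_assoc mult.commute)
  obtain H where H: "H \<in> carrier_mat n n" "transpose_mat H = H" "H * H = 1\<^sub>m n" "H *\<^sub>v w = ?e0"
    using householder_to_unit_vec[OF w(1,2) n] by blast
  have "transpose_mat (H * A * H) = transpose_mat H * transpose_mat (H * A)"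
    using transpose_mult[of "H * A" n n H n] H A by simp
  also have "transpose_mat (H * A) = transpose_mat A * transpose_mat H"
    using transpose_mult[of H n n A n] H A by simp
  finally have "transpose_mat (H * A * H) = H * A * H"
    using H A sym by (simp add: assoc_mult_mat[of _ n n _ n _ n])
  moreover have "(H * A * H) *\<^sub>v ?e0 = e \<cdot>\<^sub>v ?e0"
  proof -
    have He0: "H *\<^sub>v ?e0 = w"
      using H w unfolding H(4)[symmetric] by (simp add: assoc_mult_mat_vec[symmetric, of _ n])
    have "(H * A * H) *\<^sub>v ?e0 = (H * A) *\<^sub>v (H *\<^sub>v ?e0)"
      by (rule assoc_mult_mat_vec) (use H A in auto)
    also have "\<dots> = H *\<^sub>v (A *\<^sub>v w)" using assoc_mult_mat_vec[OF H(1) A] He0 w by simp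
    finally show ?thesis using H w by (simp add: mult_mat_vec)
  qed
  ultimately show thesis using that H(1-3) by blast
qed

theorem real_symmetric_orthogonal_diagonalization:
  fixes A :: "real mat"
  assumes "A \<in> carrier_mat n n" "transpose_mat A = A"
  shows "\<exists>P \<in> carrier_mat n n. transpose_mat P * P = 1\<^sub>m n \<and> diagonal_mat (transpose_mat P * A * P)"
  using assms
proof (induction n arbitrary: A)
  case 0
  then show ?case by (intro bexI[of _ "1\<^sub>m 0"]) (auto simp: diagonal_mat_def)
next
  case (Suc k A)
  have A: "A \<in> carrier_mat (Suc k) (Suc k)" using Suc.prems by auto
  obtain H e where H: "H \<in> carrier_mat (Suc k) (Suc k)" "transpose_mat H = H" "H * H = 1\<^sub>m (Suc k)"
      and HAH: "transpose_mat (H * A * H) = H * A * H"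
        "(H * A * H) *\<^sub>v unit_vec (Suc k) 0 = e \<cdot>\<^sub>v unit_vec (Suc k) 0"
    using symmetric_real_mat_reflect_eigenvector[OF A] Suc.prems by blast
  have "H * A * H \<in> carrier_mat (Suc k) (Suc k)" using H A by simp
  then obtain B where B: "B \<in> carrier_mat k k" "transpose_mat B = B"
      and block: "H * A * H = four_block_mat (mat 1 1 (\<lambda>_. e)) (0\<^sub>m 1 k) (0\<^sub>m k 1) B"
    using symmetric_mat_eigen_unit_vec_block[OF _ HAH] by blast
  obtain Q where Q: "Q \<in> carrier_mat k k" "transpose_mat Q * Q = 1\<^sub>m k"
      "diagonal_mat (transpose_mat Q * B * Q)"
    using Suc.IH[OF B] by blast
  define R where "R = four_block_mat (1\<^sub>m 1) (0\<^sub>m 1 k) (0\<^sub>m k 1) Q"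
  have R: "R \<in> carrier_mat (Suc k) (Suc k)" unfolding R_def using Q by auto
  have RR: "transpose_mat R * R = 1\<^sub>m (Suc k)" and diag: "diagonal_mat (transpose_mat R * (H * A * H) * R)"
    using orthogonal_diagonalization_four_block[OF Q(1,2) B(1) Q(3), of "mat 1 1 (\<lambda>_. e)"]
    unfolding R_def block by auto
  have tHR: "transpose_mat (H * R) = transpose_mat R * H"
    using H R by (simp add: transpose_mult[of _ "Suc k" "Suc k"])
  have "transpose_mat (H * R) * (H * R) = transpose_mat R * ((H * H) * R)"
    unfolding tHR using H(1) R by (simp add: assoc_mult_mat[of _ "Suc k" "Suc k" _ "Suc k" _ "Suc k"])
  then have "transpose_mat (H * R) * (H * R) = 1\<^sub>m (Suc k)" using R RR unfolding H(3) by simp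
  moreover have "transpose_mat (H * R) * A * (H * R) = transpose_mat R * (H * A * H) * R"
    unfolding tHR using H R A by (simp add: assoc_mult_mat[of _ "Suc k" "Suc k" _ "Suc k" _ "Suc k"])
  ultimately show ?case using H R diag by (intro bexI[of _ "H * R"]) auto
qed

section \<open>Eigenvalue bounds for quadratic forms\<close>

lemma proots_prod_linear_factors: "proots (\<Prod>a\<leftarrow>xs. [:- a, 1:]) = mset (xs :: real list)"
proof -
  have "(\<Prod>a\<leftarrow>xs. [:- a, 1:]) = (\<Prod>p\<leftarrow>map (\<lambda>a. [:- a, 1:]) xs. p)"
    by (simp add: o_def)
  also have "proots \<dots> = sum_list (map proots (map (\<lambda>a. [:- a, 1:]) xs))"
    by (rule proots_prod_list) auto
  also have "\<dots> = mset xs" by (simp add: o_def proots_linear_factor sum_list_singleton_mset)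
  finally show ?thesis .
qed

lemma eig_up_orthogonal_diagonalization:
  fixes \<sigma> P :: "real mat"
  assumes S: "\<sigma> \<in> carrier_mat m m" and P: "P \<in> carrier_mat m m"
    and PtP: "transpose_mat P * P = 1\<^sub>m m" and diag: "diagonal_mat (transpose_mat P * \<sigma> * P)"
  shows "eig_up \<sigma> = sort (diag_mat (transpose_mat P * \<sigma> * P))"
proof -
  define D where "D = transpose_mat P * \<sigma> * P"
  have D: "D \<in> carrier_mat m m" unfolding D_def using S P by simp
  have tP: "transpose_mat P \<in> carrier_mat m m" using P by simp
  have PPt: "P * transpose_mat P = 1\<^sub>m m" using mat_mult_left_right_inverse[OF tP P PtP] .
  have "P * D * transpose_mat P = (P * transpose_mat P) * \<sigma> * (P * transpose_mat P)"
    unfolding D_def using S P by (simp add: assoc_mult_mat[of _ m m _ m _ m])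
  then have "\<sigma> = P * D * transpose_mat P" unfolding PPt using S by simp
  then have "similar_mat \<sigma> D"
    unfolding similar_mat_def using similar_mat_witI[OF PPt PtP _ S D P tP] by blast
  then have "char_poly \<sigma> = char_poly D" by (rule char_poly_similar)
  moreover have "upper_triangular D"
    using diag D unfolding D_def[symmetric] diagonal_mat_def upper_triangular_def by auto
  ultimately show ?thesis
    unfolding eig_up_def D_def[symmetric]
    by (simp add: char_poly_upper_triangular[OF D] proots_prod_linear_factors)
qed

lemma diagonal_mat_quadratic_form:
  fixes D :: "'a::comm_semiring_1 mat"
  assumes D: "D \<in> carrier_mat m m" "diagonal_mat D" and a: "a \<in> carrier_vec m"
  shows "a \<bullet> (D *\<^sub>v a) = (\<Sum>i\<in>{0..<m}. D $$ (i,i) * (a $ i * a $ i))"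
proof -
  have Da: "(D *\<^sub>v a) $ i = D $$ (i,i) * a $ i" if i: "i < m" for i
  proof -
    have "(D *\<^sub>v a) $ i = (\<Sum>k\<in>{0..<m}. D $$ (i,k) * a $ k)"
      using D a i by (simp add: scalar_prod_def)
    also have "\<dots> = (\<Sum>k\<in>{0..<m}. if k = i then D $$ (i,i) * a $ i else 0)"
      using D i unfolding diagonal_mat_def by (intro sum.cong) auto
    finally show ?thesis using i by simp
  qed
  show ?thesis unfolding scalar_prod_def using D a
    by (intro sum.cong) (auto simp del: index_mult_mat_vec simp: Da ac_simps)
qed

lemma diagonal_mat_quadratic_form_le:
  fixes D :: "real mat"
  assumes D: "D \<in> carrier_mat m m" "diagonal_mat D" and y: "y \<in> carrier_vec m"
    and bound: "\<And>i. i < m \<Longrightarrow> y $ i \<noteq> 0 \<Longrightarrow> D $$ (i,i) \<le> c"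
  shows "y \<bullet> (D *\<^sub>v y) \<le> c * (y \<bullet> y)"
proof -
  have "y \<bullet> (D *\<^sub>v y) = (\<Sum>i\<in>{0..<m}. D $$ (i,i) * (y $ i * y $ i))"
    by (rule diagonal_mat_quadratic_form[OF D y])
  also have "\<dots> \<le> (\<Sum>i\<in>{0..<m}. c * (y $ i * y $ i))"
  proof (rule sum_mono)
    fix i assume "i \<in> {0..<m}"
    then show "D $$ (i,i) * (y $ i * y $ i) \<le> c * (y $ i * y $ i)"
      using bound by (cases "y $ i = 0") (auto intro: mult_right_mono)
  qed
  also have "\<dots> = c * (y \<bullet> y)" using y by (simp add: scalar_prod_def sum_distrib_left)
  finally show ?thesis .
qed

lemma sort_rank_index_sets:
  fixes xs :: "'a::linorder list"
  assumes j: "j < length xs"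
  obtains S T where "S \<subseteq> {..<length xs}" "T \<subseteq> {..<length xs}" "card S = Suc j" "card T = j"
    "\<And>i. i \<in> S \<Longrightarrow> xs ! i \<le> sort xs ! j"
    "\<And>i. i < length xs \<Longrightarrow> i \<notin> T \<Longrightarrow> xs ! i \<le> sort xs ! (length xs - Suc j)"
proof -
  define m where "m = length xs"
  have "mset (sort xs) = mset xs" by simp
  then obtain p where p: "p permutes {..<m}" "permute_list p xs = sort xs"
    unfolding m_def by (rule mset_eq_permutation)
  have sort_nth: "sort xs ! k = xs ! p k" if "k < m" for k
    using p that permute_list_nth[of p xs k] unfolding m_def by auto
  have p_lt: "p k < m" if "k < m" for k using permutes_in_image[OF p(1), of k] that by simp
  have inj_p: "inj p" using p(1) by (rule permutes_inj)
  have sorted: "sort xs ! k \<le> sort xs ! l" if "k \<le> l" "l < m" for k l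
    using sorted_nth_mono[OF sorted_sort that(1)] that(2) unfolding m_def by simp
  \<comment> \<open>\<open>p\<close> sends the ranks of the \<open>j + 1\<close> smallest and of the \<open>j\<close> largest entries
    to their positions\<close>
  define S where "S = p ` {..j}"
  define T where "T = p ` {m - j..<m}"
  have "S \<subseteq> {..<m}" unfolding S_def using p_lt j m_def by auto
  moreover have "T \<subseteq> {..<m}" unfolding T_def using p_lt by auto
  moreover have "card S = Suc j" unfolding S_def using card_image[OF inj_on_subset[OF inj_p]] by simp
  moreover have "card T = j"
    unfolding T_def using card_image[OF inj_on_subset[OF inj_p]] j m_def by simp
  moreover have "xs ! i \<le> sort xs ! j" if i: "i \<in> S" for i
  proof -
    obtain k where "k \<le> j" "i = p k" using i unfolding S_def by auto
    then show ?thesis using sort_nth[of k] sorted[of k j] j m_def by simp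
  qed
  moreover have "xs ! i \<le> sort xs ! (m - Suc j)" if "i < m" "i \<notin> T" for i
  proof -
    have "i \<in> p ` {..<m}" using that(1) permutes_image[OF p(1)] by simp
    then obtain k where k: "k < m" "i = p k" by auto
    with that(2) have "k \<le> m - Suc j" unfolding T_def by auto
    then show ?thesis using sort_nth[of k] sorted[of k "m - Suc j"] k j m_def by simp
  qed
  ultimately show thesis using that unfolding m_def by blast
qed

lemma exists_nonzero_solution_underdetermined:
  fixes f :: "'r \<Rightarrow> 'i \<Rightarrow> 'a::field"
  assumes "finite R" "finite I" "card R < card I"
  shows "\<exists>c. (\<exists>i\<in>I. c i \<noteq> 0) \<and> (\<forall>r\<in>R. (\<Sum>i\<in>I. f r i * c i) = 0)"
  using assms
proof (induction R arbitrary: I f rule: finite_induct)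
  case empty
  then obtain i where "i \<in> I" by fastforce
  then show ?case by (intro exI[of _ "\<lambda>_. 1"]) auto
next
  case (insert q R I f)
  show ?case
  proof (cases "\<forall>i\<in>I. f q i = 0")
    case True
    from insert.IH[of I f] insert.prems insert.hyps obtain c where
      c: "\<exists>i\<in>I. c i \<noteq> 0" "\<forall>r\<in>R. (\<Sum>i\<in>I. f r i * c i) = 0" by auto
    show ?thesis using c True by (intro exI[of _ c]) auto
  next
    case False
    then obtain p where p: "p \<in> I" "f q p \<noteq> 0" by auto
    \<comment> \<open>eliminate the unknown \<open>c p\<close> by means of the equation \<open>q\<close>\<close>
    define I' where "I' = I - {p}"
    define g where "g r i = f r i - f r p * f q i / f q p" for r i
    have "card R < card I'" using insert.prems insert.hyps p unfolding I'_def
      by (simp add: card_Diff_singleton)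
    with insert.IH[of I' g] insert.prems obtain c where
      c: "\<exists>i\<in>I'. c i \<noteq> 0" "\<forall>r\<in>R. (\<Sum>i\<in>I'. g r i * c i) = 0" unfolding I'_def by auto
    define c' where "c' = c(p := - (\<Sum>i\<in>I'. f q i * c i) / f q p)"
    have split: "(\<Sum>i\<in>I. h i) = h p + (\<Sum>i\<in>I'. h i)" for h :: "'i \<Rightarrow> 'a"
      using p insert.prems unfolding I'_def by (simp add: sum.remove)
    have c'_I': "(\<Sum>i\<in>I'. h i * c' i) = (\<Sum>i\<in>I'. h i * c i)" for h :: "'i \<Rightarrow> 'a"
      unfolding c'_def I'_def by (intro sum.cong) auto
    show ?thesis
    proof (intro exI[of _ c'] conjI ballI)
      show "\<exists>i\<in>I. c' i \<noteq> 0" using c(1) unfolding c'_def I'_def by auto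
      fix r assume r: "r \<in> insert q R"
      show "(\<Sum>i\<in>I. f r i * c' i) = 0"
      proof (cases "r = q")
        case True
        then show ?thesis using p(2) unfolding split c'_I' by (simp add: c'_def)
      next
        case False
        with r have "r \<in> R" by auto
        moreover have "(\<Sum>i\<in>I'. g r i * c i)
            = (\<Sum>i\<in>I'. f r i * c i) - f r p / f q p * (\<Sum>i\<in>I'. f q i * c i)"
          unfolding g_def by (simp add: algebra_simps sum_subtractf sum_distrib_left)
        ultimately show ?thesis using c(2) p(2) unfolding split c'_I'
          by (simp add: c'_def field_simps)
      qed
    qed
  qed
qed

lemma exists_vec_supported_image_vanishing:
  fixes A :: "'a::field mat"
  assumes A: "A \<in> carrier_mat k m" and S: "S \<subseteq> {..<m}" and T: "T \<subseteq> {..<k}"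
    and card: "card T < card S"
  obtains y where "y \<in> carrier_vec m" "y \<noteq> 0\<^sub>v m"
    "\<And>i. i < m \<Longrightarrow> i \<notin> S \<Longrightarrow> y $ i = 0"
    "\<And>r. r \<in> T \<Longrightarrow> (A *\<^sub>v y) $ r = 0"
proof -
  have "finite S" "finite T" using S T finite_subset by auto
  then obtain c where c: "\<exists>i\<in>S. c i \<noteq> 0" "\<forall>r\<in>T. (\<Sum>i\<in>S. A $$ (r,i) * c i) = 0"
    using exists_nonzero_solution_underdetermined[OF _ _ card, of "\<lambda>r i. A $$ (r,i)"] by auto
  define y where "y = vec m (\<lambda>i. if i \<in> S then c i else 0)"
  show thesis
  proof (rule that)
    show y: "y \<in> carrier_vec m" unfolding y_def by simp
    show "y \<noteq> 0\<^sub>v m" using c(1) S unfolding y_def by (auto simp: vec_eq_iff)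
    show "y $ i = 0" if "i < m" "i \<notin> S" for i using that unfolding y_def by simp
    show "(A *\<^sub>v y) $ r = 0" if r: "r \<in> T" for r
    proof -
      have "(A *\<^sub>v y) $ r = (\<Sum>i\<in>{0..<m}. A $$ (r,i) * y $ i)"
        using A y r T by (auto simp: scalar_prod_def)
      also have "\<dots> = (\<Sum>i\<in>{0..<m}. if i \<in> S then A $$ (r,i) * c i else 0)"
        unfolding y_def by (intro sum.cong) auto
      also have "\<dots> = (\<Sum>i\<in>S. A $$ (r,i) * c i)"
        using S by (simp add: sum.inter_restrict[symmetric] Int_absorb1 atLeast0LessThan)
      finally show ?thesis using c(2) r by simp
    qed
  qed
qed

lemma diagonal_mat_two_sided_sorted_diag_bound:
  fixes D B :: "real mat"
  assumes D: "D \<in> carrier_mat m m" "diagonal_mat D" and B: "B \<in> carrier_mat m m" and j: "j < m"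
  obtains c where "c \<in> carrier_vec m" "c \<noteq> 0\<^sub>v m"
    "c \<bullet> (D *\<^sub>v c) \<le> sort (diag_mat D) ! j * (c \<bullet> c)"
    "(B *\<^sub>v c) \<bullet> (D *\<^sub>v (B *\<^sub>v c)) \<le> sort (diag_mat D) ! (m - Suc j) * ((B *\<^sub>v c) \<bullet> (B *\<^sub>v c))"
proof -
  have len: "length (diag_mat D) = m" using D by (simp add: diag_mat_def)
  have nth: "diag_mat D ! i = D $$ (i,i)" if "i < m" for i using D that by (simp add: diag_mat_def)
  obtain S T where ST: "S \<subseteq> {..<m}" "T \<subseteq> {..<m}" "card S = Suc j" "card T = j"
      and S_le: "\<And>i. i \<in> S \<Longrightarrow> diag_mat D ! i \<le> sort (diag_mat D) ! j"
      and T_le: "\<And>i. i < m \<Longrightarrow> i \<notin> T \<Longrightarrow> diag_mat D ! i \<le> sort (diag_mat D) ! (m - Suc j)"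
    using sort_rank_index_sets[of j "diag_mat D"] j unfolding len by blast
  obtain c where c: "c \<in> carrier_vec m" "c \<noteq> 0\<^sub>v m"
      "\<And>i. i < m \<Longrightarrow> i \<notin> S \<Longrightarrow> c $ i = 0"
      "\<And>r. r \<in> T \<Longrightarrow> (B *\<^sub>v c) $ r = 0"
    using exists_vec_supported_image_vanishing[OF B ST(1,2)] ST(3,4) by auto
  show thesis
  proof (rule that[OF c(1,2)])
    show "c \<bullet> (D *\<^sub>v c) \<le> sort (diag_mat D) ! j * (c \<bullet> c)"
      using c(3) S_le nth by (intro diagonal_mat_quadratic_form_le[OF D c(1)]) force
    show "(B *\<^sub>v c) \<bullet> (D *\<^sub>v (B *\<^sub>v c)) \<le> sort (diag_mat D) ! (m - Suc j) * ((B *\<^sub>v c) \<bullet> (B *\<^sub>v c))"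
      using c(4) T_le nth B c(1) by (intro diagonal_mat_quadratic_form_le[OF D]) force+
  qed
qed

lemma scalar_prod_mult_mat_vec_conj:
  fixes P M :: "'a::comm_semiring_0 mat"
  assumes P: "P \<in> carrier_mat m m" and M: "M \<in> carrier_mat m m"
    and a: "a \<in> carrier_vec m" and b: "b \<in> carrier_vec m"
  shows "(P *\<^sub>v a) \<bullet> (M *\<^sub>v (P *\<^sub>v b)) = a \<bullet> ((transpose_mat P * M * P) *\<^sub>v b)"
proof -
  have tP: "transpose_mat P \<in> carrier_mat m m" using P by simp
  have w: "M *\<^sub>v (P *\<^sub>v b) \<in> carrier_vec m" using M P b by simp
  have "(transpose_mat P * M * P) *\<^sub>v b = transpose_mat P *\<^sub>v (M *\<^sub>v (P *\<^sub>v b))"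
    using tP M P b by (simp add: assoc_mult_mat_vec[of _ m m _ m])
  then have "a \<bullet> ((transpose_mat P * M * P) *\<^sub>v b) = (transpose_mat P *\<^sub>v (M *\<^sub>v (P *\<^sub>v b))) \<bullet> a"
    using tP w a by (simp add: comm_scalar_prod[of _ m])
  also have "\<dots> = (M *\<^sub>v (P *\<^sub>v b)) \<bullet> (P *\<^sub>v a)" by (rule transpose_vec_mult_scalar[OF P a w])
  also have "\<dots> = (P *\<^sub>v a) \<bullet> (M *\<^sub>v (P *\<^sub>v b))" using w P a by (simp add: comm_scalar_prod[of _ m])
  finally show ?thesis by simp
qed

lemma orthogonal_mult_vec_scalar_prod:
  fixes P :: "'a::comm_semiring_1 mat"
  assumes P: "P \<in> carrier_mat m m" "transpose_mat P * P = 1\<^sub>m m"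
    and a: "a \<in> carrier_vec m" and b: "b \<in> carrier_vec m"
  shows "(P *\<^sub>v a) \<bullet> (P *\<^sub>v b) = a \<bullet> b"
  using scalar_prod_mult_mat_vec_conj[OF P(1) one_carrier_mat a b] P b by simp

lemma symmetric_mat_eig_two_sided_bound:
  fixes \<sigma> Q :: "real mat"
  assumes \<sigma>: "\<sigma> \<in> carrier_mat m m" "transpose_mat \<sigma> = \<sigma>" and Q: "Q \<in> carrier_mat m m"
    and j: "j < m"
  obtains y where "y \<in> carrier_vec m" "y \<noteq> 0\<^sub>v m"
    "y \<bullet> (\<sigma> *\<^sub>v y) \<le> eig_up \<sigma> ! j * (y \<bullet> y)"
    "(Q *\<^sub>v y) \<bullet> (\<sigma> *\<^sub>v (Q *\<^sub>v y)) \<le> eig_down \<sigma> ! j * ((Q *\<^sub>v y) \<bullet> (Q *\<^sub>v y))"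
proof -
  obtain P where P: "P \<in> carrier_mat m m" "transpose_mat P * P = 1\<^sub>m m"
      and diag: "diagonal_mat (transpose_mat P * \<sigma> * P)"
    using real_symmetric_orthogonal_diagonalization[OF \<sigma>] by blast
  have PPt: "P * transpose_mat P = 1\<^sub>m m"
    using mat_mult_left_right_inverse[OF _ P(1) P(2)] P(1) by simp
  define D where "D = transpose_mat P * \<sigma> * P"
  define B where "B = transpose_mat P * Q * P"
  have D: "D \<in> carrier_mat m m" unfolding D_def using P \<sigma> by simp
  have B: "B \<in> carrier_mat m m" unfolding B_def using P Q by simp
  have up: "eig_up \<sigma> = sort (diag_mat D)"
    unfolding D_def by (rule eig_up_orthogonal_diagonalization[OF \<sigma>(1) P diag])
  then have down: "eig_down \<sigma> ! j = sort (diag_mat D) ! (m - Suc j)"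
    using D j by (simp add: eig_down_def rev_nth diag_mat_def)
  obtain c where c: "c \<in> carrier_vec m" "c \<noteq> 0\<^sub>v m"
      and c_up: "c \<bullet> (D *\<^sub>v c) \<le> sort (diag_mat D) ! j * (c \<bullet> c)"
      and c_down: "(B *\<^sub>v c) \<bullet> (D *\<^sub>v (B *\<^sub>v c)) \<le> sort (diag_mat D) ! (m - Suc j) * ((B *\<^sub>v c) \<bullet> (B *\<^sub>v c))"
    using diagonal_mat_two_sided_sorted_diag_bound[OF D diag[folded D_def] B j] by blast
  define y where "y = P *\<^sub>v c"
  have y: "y \<in> carrier_vec m" unfolding y_def using P c by simp
  have Bc: "B *\<^sub>v c \<in> carrier_vec m" using B c by simp
  have Qy: "Q *\<^sub>v y = P *\<^sub>v (B *\<^sub>v c)"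
  proof -
    have "P *\<^sub>v (B *\<^sub>v c) = (P * transpose_mat P) *\<^sub>v (Q *\<^sub>v y)"
      unfolding B_def y_def using P Q c by (simp add: assoc_mult_mat_vec[of _ m m _ m] assoc_mult_mat[of _ m m _ m _ m])
    then show ?thesis unfolding PPt using Q y by simp
  qed
  have yy: "y \<bullet> y = c \<bullet> c" unfolding y_def by (rule orthogonal_mult_vec_scalar_prod[OF P c(1) c(1)])
  show thesis
  proof (rule that[OF y])
    show "y \<noteq> 0\<^sub>v m" using yy scalar_prod_self_pos[OF c] y by auto
    show "y \<bullet> (\<sigma> *\<^sub>v y) \<le> eig_up \<sigma> ! j * (y \<bullet> y)"
      using c_up yy scalar_prod_mult_mat_vec_conj[OF P(1) \<sigma>(1) c(1) c(1)] unfolding up y_def D_def by simp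
    show "(Q *\<^sub>v y) \<bullet> (\<sigma> *\<^sub>v (Q *\<^sub>v y)) \<le> eig_down \<sigma> ! j * ((Q *\<^sub>v y) \<bullet> (Q *\<^sub>v y))"
      using c_down scalar_prod_mult_mat_vec_conj[OF P(1) \<sigma>(1) Bc Bc]
        orthogonal_mult_vec_scalar_prod[OF P Bc Bc]
      unfolding down Qy D_def by simp
  qed
qed

section \<open>The symplectic form and covariance matrices\<close>

definition symp_partner :: "nat \<Rightarrow> nat" where
  "symp_partner i = (if even i then i + 1 else i - 1)"

definition symp_sign :: "nat \<Rightarrow> real" where
  "symp_sign i = (if even i then 1 else -1)"

lemma symp_partner_less: "i < 2 * n \<Longrightarrow> symp_partner i < 2 * n"
  unfolding symp_partner_def by (auto elim!: evenE)

lemma symp_partner_partner [simp]: "symp_partner (symp_partner i) = i"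
  unfolding symp_partner_def by (auto elim!: oddE)

lemma symp_sign_partner [simp]: "symp_sign (symp_partner i) = - symp_sign i"
  unfolding symp_sign_def symp_partner_def by (auto elim!: oddE)

lemma symp_sign_square [simp]: "symp_sign i * symp_sign i = 1"
  unfolding symp_sign_def by simp

lemma symp_form_carrier: "symp_form n \<in> carrier_mat (2 * n) (2 * n)"
  unfolding symp_form_def by simp

lemma symp_form_index:
  assumes "i < 2 * n" "k < 2 * n"
  shows "symp_form n $$ (i,k) = (if k = symp_partner i then symp_sign i else 0)"
  using assms unfolding symp_form_def symp_partner_def symp_sign_def
  by (auto elim!: oddE; presburger)

lemma symp_form_mult_vec_index:
  assumes u: "u \<in> carrier_vec (2 * n)" and i: "i < 2 * n"
  shows "(symp_form n *\<^sub>v u) $ i = symp_sign i * u $ symp_partner i"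
proof -
  have "(symp_form n *\<^sub>v u) $ i = (\<Sum>k\<in>{0..<2*n}. symp_form n $$ (i,k) * u $ k)"
    using u i symp_form_carrier[of n] by (simp add: scalar_prod_def)
  also have "\<dots> = (\<Sum>k\<in>{0..<2*n}. if k = symp_partner i then symp_sign i * u $ symp_partner i else 0)"
    using i by (intro sum.cong) (auto simp: symp_form_index)
  also have "\<dots> = symp_sign i * u $ symp_partner i" using symp_partner_less[OF i] by simp
  finally show ?thesis .
qed

lemma symp_form_mult_vec_carrier: "u \<in> carrier_vec (2 * n) \<Longrightarrow> symp_form n *\<^sub>v u \<in> carrier_vec (2 * n)"
  using symp_form_carrier[of n] by simp

lemma symp_form_symp_form_mult_vec:
  assumes u: "u \<in> carrier_vec (2 * n)"
  shows "symp_form n *\<^sub>v (symp_form n *\<^sub>v u) = - u"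
proof (rule eq_vecI)
  fix i assume "i < dim_vec (- u)"
  then have i: "i < 2 * n" using u by simp
  then show "(symp_form n *\<^sub>v (symp_form n *\<^sub>v u)) $ i = (- u) $ i"
    using u symp_partner_less[OF i]
    by (simp add: symp_form_mult_vec_index symp_form_mult_vec_carrier del: index_mult_mat_vec)
qed (use u symp_form_carrier[of n] in auto)

lemma symp_form_mult_vec_norm:
  assumes u: "u \<in> carrier_vec (2 * n)"
  shows "(symp_form n *\<^sub>v u) \<bullet> (symp_form n *\<^sub>v u) = u \<bullet> u"
proof -
  have "(symp_form n *\<^sub>v u) \<bullet> (symp_form n *\<^sub>v u) = (\<Sum>i\<in>{0..<2*n}. u $ symp_partner i * u $ symp_partner i)"
    unfolding scalar_prod_def using u symp_form_carrier[of n]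
    by (intro sum.cong) (auto simp: symp_form_mult_vec_index ac_simps simp del: index_mult_mat_vec)
  also have "\<dots> = (\<Sum>i\<in>{0..<2*n}. u $ i * u $ i)"
    by (rule sum.reindex_bij_witness[of _ symp_partner symp_partner]) (auto simp: symp_partner_less)
  also have "\<dots> = u \<bullet> u" using u by (simp add: scalar_prod_def)
  finally show ?thesis .
qed

lemma psd_sigma_plus_iOmega_real_form:
  fixes \<sigma> :: "real mat" and x y :: "real vec"
  assumes \<sigma>: "\<sigma> \<in> carrier_mat (2 * n) (2 * n)" and psd: "psd_cmat (sigma_plus_iOmega n \<sigma>)"
    and x: "x \<in> carrier_vec (2 * n)" and y: "y \<in> carrier_vec (2 * n)"
  shows "0 \<le> x \<bullet> (\<sigma> *\<^sub>v x) + y \<bullet> (\<sigma> *\<^sub>v y) - x \<bullet> (symp_form n *\<^sub>v y) + y \<bullet> (symp_form n *\<^sub>v x)"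
proof -
  define m where "m = 2 * n"
  define \<Omega> where "\<Omega> = symp_form n"
  have \<Omega>: "\<Omega> \<in> carrier_mat m m" unfolding \<Omega>_def m_def by (rule symp_form_carrier)
  have \<sigma>m: "\<sigma> \<in> carrier_mat m m" using \<sigma> unfolding m_def .
  define M where "M = sigma_plus_iOmega n \<sigma>"
  have M: "M \<in> carrier_mat m m"
    unfolding M_def sigma_plus_iOmega_def using \<sigma>m \<Omega> unfolding \<Omega>_def by auto
  have M_index: "M $$ (i,j) = Complex (\<sigma> $$ (i,j)) (\<Omega> $$ (i,j))" if "i < m" "j < m" for i j
    using that \<sigma>m \<Omega> unfolding M_def sigma_plus_iOmega_def \<Omega>_def by (simp add: complex_eq_iff)
  \<comment> \<open>test the positivity of \<open>M\<close> on the complex vector \<open>x + i y\<close>\<close>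
  define v where "v = vec m (\<lambda>i. Complex (x $ i) (y $ i))"
  have v: "v \<in> carrier_vec m" unfolding v_def by simp
  from psd v M have "0 \<le> Re (conjugate v \<bullet> (M *\<^sub>v v))" unfolding psd_cmat_def M_def[symmetric] by auto
  also have "conjugate v \<bullet> (M *\<^sub>v v) = (\<Sum>i\<in>{0..<m}. \<Sum>j\<in>{0..<m}. cnj (v $ i) * M $$ (i,j) * v $ j)"
    using v M by (simp add: scalar_prod_def sum_distrib_left mult.assoc)
  also have "Re \<dots> = (\<Sum>i\<in>{0..<m}. \<Sum>j\<in>{0..<m}.
      \<sigma> $$ (i,j) * (x $ i * x $ j + y $ i * y $ j) - \<Omega> $$ (i,j) * (x $ i * y $ j - y $ i * x $ j))"
    unfolding Re_sum by (intro sum.cong refl) (simp add: M_index v_def algebra_simps)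
  also have "\<dots> = x \<bullet> (\<sigma> *\<^sub>v x) + y \<bullet> (\<sigma> *\<^sub>v y) - x \<bullet> (\<Omega> *\<^sub>v y) + y \<bullet> (\<Omega> *\<^sub>v x)"
    using x y \<sigma>m \<Omega> unfolding m_def[symmetric]
    by (simp add: scalar_prod_def sum_distrib_left sum.distrib sum_subtractf algebra_simps)
  finally show ?thesis unfolding \<Omega>_def .
qed

lemma covariance_mat_quadratic_form_nonneg:
  fixes \<sigma> :: "real mat"
  assumes \<sigma>: "\<sigma> \<in> carrier_mat (2 * n) (2 * n)" and psd: "psd_cmat (sigma_plus_iOmega n \<sigma>)"
    and y: "y \<in> carrier_vec (2 * n)"
  shows "0 \<le> y \<bullet> (\<sigma> *\<^sub>v y)"
proof -
  have "symp_form n *\<^sub>v 0\<^sub>v (2 * n) = 0\<^sub>v (2 * n)" using symp_form_carrier[of n] by auto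
  then show ?thesis
    using psd_sigma_plus_iOmega_real_form[OF \<sigma> psd y zero_carrier_vec] \<sigma> y symp_form_carrier[of n]
    by simp
qed

lemma quadratic_nonneg_imp_discriminant_le:
  fixes a b c :: real
  assumes nonneg: "\<And>t. 0 \<le> a - 2 * t * c + t\<^sup>2 * b" and b: "0 \<le> b"
  shows "c\<^sup>2 \<le> a * b"
proof (cases "b = 0")
  case True
  have "c = 0"
  proof (rule ccontr)
    assume "c \<noteq> 0"
    then show False using nonneg[of "(a + 1) / (2 * c)"] True by (simp add: field_simps)
  qed
  then show ?thesis using True by simp
next
  case False
  with b have "0 < b" by simp
  then show ?thesis using nonneg[of "c / b"] by (simp add: field_simps power2_eq_square)
qed

lemma covariance_mat_uncertainty:
  fixes \<sigma> :: "real mat"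
  assumes \<sigma>: "\<sigma> \<in> carrier_mat (2 * n) (2 * n)" and psd: "psd_cmat (sigma_plus_iOmega n \<sigma>)"
    and y: "y \<in> carrier_vec (2 * n)"
  shows "(y \<bullet> y)\<^sup>2 \<le> (y \<bullet> (\<sigma> *\<^sub>v y)) * ((symp_form n *\<^sub>v y) \<bullet> (\<sigma> *\<^sub>v (symp_form n *\<^sub>v y)))"
proof (rule quadratic_nonneg_imp_discriminant_le)
  let ?z = "symp_form n *\<^sub>v y"
  have z: "?z \<in> carrier_vec (2 * n)" using y by (rule symp_form_mult_vec_carrier)
  show "0 \<le> ?z \<bullet> (\<sigma> *\<^sub>v ?z)" by (rule covariance_mat_quadratic_form_nonneg[OF \<sigma> psd z])
  fix t :: real
  \<comment> \<open>the real form of the positivity of \<open>\<sigma> + i\<Omega>\<close> at the complex vector \<open>y - i t \<Omega> y\<close>\<close>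
  have "0 \<le> y \<bullet> (\<sigma> *\<^sub>v y) + ((- t) \<cdot>\<^sub>v ?z) \<bullet> (\<sigma> *\<^sub>v ((- t) \<cdot>\<^sub>v ?z))
      - y \<bullet> (symp_form n *\<^sub>v ((- t) \<cdot>\<^sub>v ?z)) + ((- t) \<cdot>\<^sub>v ?z) \<bullet> ?z"
    using psd_sigma_plus_iOmega_real_form[OF \<sigma> psd y, of "(- t) \<cdot>\<^sub>v ?z"] z by simp
  also have "\<dots> = y \<bullet> (\<sigma> *\<^sub>v y) - 2 * t * (y \<bullet> y) + t\<^sup>2 * (?z \<bullet> (\<sigma> *\<^sub>v ?z))"
    using y z \<sigma> symp_form_carrier[of n]
    by (simp add: mult_mat_vec symp_form_symp_form_mult_vec symp_form_mult_vec_norm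
        power2_eq_square algebra_simps del: index_mult_mat_vec)
  finally show "0 \<le> y \<bullet> (\<sigma> *\<^sub>v y) - 2 * t * (y \<bullet> y) + t\<^sup>2 * (?z \<bullet> (\<sigma> *\<^sub>v ?z))" .
qed

theorem lemma2:
  fixes n :: nat and \<sigma> :: "real mat"
  assumes "n \<ge> 1"
    and "\<sigma> \<in> carrier_mat (2*n) (2*n)"
    and "transpose_mat \<sigma> = \<sigma>"
    and "psd_cmat (sigma_plus_iOmega n \<sigma>)"
  shows "\<forall>j \<in> {1..n}. eig_up \<sigma> ! (j - 1) * eig_down \<sigma> ! (j - 1) \<ge> 1"
proof
  fix j assume j: "j \<in> {1..n}"
  let ?up = "eig_up \<sigma> ! (j - 1)" and ?down = "eig_down \<sigma> ! (j - 1)"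
  let ?z = "\<lambda>y. symp_form n *\<^sub>v y"
  have "j - 1 < 2 * n" using j by auto
  then obtain y where y: "y \<in> carrier_vec (2 * n)" "y \<noteq> 0\<^sub>v (2 * n)"
      and up: "y \<bullet> (\<sigma> *\<^sub>v y) \<le> ?up * (y \<bullet> y)"
      and down: "?z y \<bullet> (\<sigma> *\<^sub>v ?z y) \<le> ?down * (?z y \<bullet> ?z y)"
    by (rule symmetric_mat_eig_two_sided_bound[OF assms(2,3) symp_form_carrier])
  have z: "?z y \<in> carrier_vec (2 * n)" using y(1) by (rule symp_form_mult_vec_carrier)
  have r: "0 < y \<bullet> y" by (rule scalar_prod_self_pos[OF y])
  have "(y \<bullet> y)\<^sup>2 \<le> (y \<bullet> (\<sigma> *\<^sub>v y)) * (?z y \<bullet> (\<sigma> *\<^sub>v ?z y))"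
    by (rule covariance_mat_uncertainty[OF assms(2,4) y(1)])
  also have "\<dots> \<le> (?up * (y \<bullet> y)) * (?down * (y \<bullet> y))"
    using up down symp_form_mult_vec_norm[OF y(1)]
      covariance_mat_quadratic_form_nonneg[OF assms(2,4) y(1)]
      covariance_mat_quadratic_form_nonneg[OF assms(2,4) z]
    by (intro mult_mono) auto
  finally have "1 * (y \<bullet> y)\<^sup>2 \<le> (?up * ?down) * (y \<bullet> y)\<^sup>2" by (simp add: power2_eq_square ac_simps)
  then show "?up * ?down \<ge> 1" using r by (simp add: mult_le_cancel_right)
qed

end
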